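(* Let $k$ be a field of characteristic $0$, $\phi\in k(x)$ a nonconstant rational function and $n\ge1$. Suppose that the dynatomic polynomial $\Phi_{n,\phi}$ has nonzero discriminant. Then the dynatomic group $G_{n,\phi}$ is the Galois group of $\Phi_{n,\phi}$ over $k$.
   Context: For each $d\ge1$ write $\phi^d=p_d/q_d$ with $p_d,q_d\in k[x]$ coprime ($\phi^d$ the $d$-fold composition). The $n$th dynatomic polynomial is $\Phi_{n,\phi}=\prod_{d\mid n}(x\,q_d-p_d)^{\mu(n/d)}$, $\mu$ the Möbius function; it is a polynomial in $k[x]$. A point $P\in\mathbb{P}^1(\bar k)$ is $n$-periodic if $\phi^n(P)=P$ with $n$ minimal. The $n$th dynatomic field $k_{n,\phi}$ is the compositum of the fields of definition $k(P)$ of all $n$-periodic points $P\in\mathbb{P}^1(\bar k)$ (with $k(\infty)=k$), and $G_{n,\phi}=\operatorname{Gal}(k_{n,\phi}/k)$. *)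

theory Defs
  imports "HOL-Algebra.Algebraic_Closure_Type" "Subresultants.Resultant_Prelim"
    "HOL-Computational_Algebra.Squarefree"
begin

definition moebius_mu :: "nat \<Rightarrow> int" where
  "moebius_mu n = (if squarefree n then (-1) ^ card (prime_factors n) else 0)"

definition poly_discriminant :: "'a :: field poly \<Rightarrow> 'a" where
  "poly_discriminant f =
     (-1) ^ (degree f * (degree f - 1) div 2) * resultant f (pderiv f) / lead_coeff f"

definition rat_const :: "'a :: field \<Rightarrow> 'a poly fract" where
  "rat_const c = to_fract [:c:]"

definition rat_X :: "'a :: field poly fract" where
  "rat_X = to_fract [:0, 1:]"

definition rat_subst :: "'a :: field poly \<Rightarrow> 'a poly \<Rightarrow> 'a poly fract \<Rightarrow> 'a poly fract" where
  "rat_subst p q g = poly (map_poly rat_const p) g / poly (map_poly rat_const q) g"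

definition rat_iter :: "'a :: field poly \<Rightarrow> 'a poly \<Rightarrow> nat \<Rightarrow> 'a poly fract" where
  "rat_iter p q d = (rat_subst p q ^^ d) rat_X"

definition nonconst_ratfun :: "'a :: field poly \<Rightarrow> 'a poly \<Rightarrow> bool" where
  "nonconst_ratfun p q \<longleftrightarrow> q \<noteq> 0 \<and> coprime p q \<and> (degree p \<ge> 1 \<or> degree q \<ge> 1)"

definition iterate_reps :: "'a :: field poly \<Rightarrow> 'a poly \<Rightarrow> (nat \<Rightarrow> 'a poly) \<Rightarrow> (nat \<Rightarrow> 'a poly) \<Rightarrow> bool" where
  "iterate_reps p q pd qd \<longleftrightarrow>
     (\<forall>d\<ge>1. qd d \<noteq> 0 \<and> coprime (pd d) (qd d) \<and>
             to_fract (pd d) / to_fract (qd d) = rat_iter p q d)"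

text \<open>The n-th dynatomic polynomial: prod over d | n of (x q_d - p_d)^mu(n/d),
  computed in k(x); it is a polynomial, and we take that polynomial.\<close>
definition dynatomic_fract :: "(nat \<Rightarrow> 'a :: field poly) \<Rightarrow> (nat \<Rightarrow> 'a poly) \<Rightarrow> nat \<Rightarrow> 'a poly fract" where
  "dynatomic_fract pd qd n =
     (\<Prod>d\<in>{d. d dvd n}. to_fract ([:0, 1:] * qd d - pd d) powi moebius_mu (n div d))"

definition dynatomic_poly :: "(nat \<Rightarrow> 'a :: field poly) \<Rightarrow> (nat \<Rightarrow> 'a poly) \<Rightarrow> nat \<Rightarrow> 'a poly" where
  "dynatomic_poly pd qd n = (THE P. to_fract P = dynatomic_fract pd qd n)"

text \<open>P^1(kbar) = kbar option, None being the point at infinity.\<close>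
definition phi_P1 :: "'a :: field poly \<Rightarrow> 'a poly \<Rightarrow> 'a alg_closure option \<Rightarrow> 'a alg_closure option" where
  "phi_P1 p q P = (case P of
      Some a \<Rightarrow> (if poly (map_poly to_ac q) a \<noteq> 0
                 then Some (poly (map_poly to_ac p) a / poly (map_poly to_ac q) a)
                 else None)
    | None \<Rightarrow> (if degree p > degree q then None
              else Some (to_ac (coeff p (degree q) / lead_coeff q))))"

definition periodic_point :: "'a :: field poly \<Rightarrow> 'a poly \<Rightarrow> nat \<Rightarrow> 'a alg_closure option \<Rightarrow> bool" where
  "periodic_point p q n P \<longleftrightarrow> n \<ge> 1 \<and> (phi_P1 p q ^^ n) P = P \<and>
      (\<forall>m. 1 \<le> m \<and> m < n \<longrightarrow> (phi_P1 p q ^^ m) P \<noteq> P)"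

definition is_subfield :: "'a :: field set \<Rightarrow> bool" where
  "is_subfield F \<longleftrightarrow> 0 \<in> F \<and> 1 \<in> F \<and>
     (\<forall>x\<in>F. \<forall>y\<in>F. x + y \<in> F \<and> x * y \<in> F) \<and>
     (\<forall>x\<in>F. - x \<in> F \<and> inverse x \<in> F)"

definition gen_field :: "'a :: field set \<Rightarrow> 'a set" where
  "gen_field S = \<Inter> {F. is_subfield F \<and> S \<subseteq> F}"

definition base_field :: "'a :: field alg_closure set" where
  "base_field = range to_ac"

definition field_of_def :: "'a :: field alg_closure option \<Rightarrow> 'a alg_closure set" where
  "field_of_def P = (case P of None \<Rightarrow> gen_field base_field
                             | Some a \<Rightarrow> gen_field (insert a base_field))"

definition dynatomic_field :: "'a :: field poly \<Rightarrow> 'a poly \<Rightarrow> nat \<Rightarrow> 'a alg_closure set" where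
  "dynatomic_field p q n =
     gen_field (base_field \<union> \<Union> {field_of_def P | P. periodic_point p q n P})"

definition k_automorphisms :: "'a :: field alg_closure set \<Rightarrow> ('a alg_closure \<Rightarrow> 'a alg_closure) set" where
  "k_automorphisms L = {\<sigma>. \<sigma> \<in> extensional L \<and> bij_betw \<sigma> L L \<and>
      (\<forall>x\<in>L. \<forall>y\<in>L. \<sigma> (x + y) = \<sigma> x + \<sigma> y \<and> \<sigma> (x * y) = \<sigma> x * \<sigma> y) \<and>
      (\<forall>c. \<sigma> (to_ac c) = to_ac c)}"

definition galois_group :: "'a :: field alg_closure set \<Rightarrow> ('a alg_closure \<Rightarrow> 'a alg_closure) monoid" where
  "galois_group L = \<lparr> carrier = k_automorphisms L,
                      monoid.mult = (\<lambda>\<sigma> \<tau>. restrict (\<sigma> \<circ> \<tau>) L),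
                      monoid.one = restrict id L \<rparr>"

definition splitting_field :: "'a :: field poly \<Rightarrow> 'a alg_closure set" where
  "splitting_field f = gen_field (base_field \<union> {x. poly (map_poly to_ac f) x = 0})"

definition poly_galois_group :: "'a :: field poly \<Rightarrow> ('a alg_closure \<Rightarrow> 'a alg_closure) monoid" where
  "poly_galois_group f = galois_group (splitting_field f)"

end

theory Submission
  imports Defs "HOL-Computational_Algebra.Polynomial_FPS" "Subresultants.Subresultant_Gcd"
    "HOL-Combinatorics.Cycles"
begin

text \<open>Everything happens in the algebraic closure: the dynatomic field is generated over \<open>k\<close>
  by the finite points of exact period \<open>n\<close> (the point \<open>\<infinity>\<close> only contributes \<open>k\<close>), and the
  splitting field of \<open>\<Phi>\<^sub>n\<close> by its roots, so it suffices that these two sets coincide.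
  The multiplicity of \<open>a\<close> as a root of \<open>\<Phi>\<^sub>n\<close> is the Moebius sum over \<open>d | n\<close> of its
  multiplicities as a root of \<open>x q\<^sub>d - p\<^sub>d\<close>. If \<open>a\<close> has exact period \<open>m | n\<close>, these are the
  orders of vanishing of \<open>X - G\<^sup>j\<close> for the local germ \<open>G\<close> of \<open>\<phi>\<^sup>m\<close> at \<open>a\<close>, and a computation
  with the multiplier \<open>G'(0)\<close> shows that the Moebius sum is positive if \<open>m = n\<close> and is \<open>0\<close>
  or at least \<open>2\<close> otherwise. A nonzero discriminant makes every multiplicity at most \<open>1\<close>,
  so the roots of \<open>\<Phi>\<^sub>n\<close> are exactly the points of exact period \<open>n\<close>.\<close>

text \<open>Jordan_Normal_Form, imported through Subresultants, also uses \<open>$\<close> for vector entries.\<close>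
no_notation Matrix.vec_index (infixl "$" 100)

section \<open>The Moebius function\<close>

lemma moebius_mu_1 [simp]: "moebius_mu 1 = 1" "moebius_mu (Suc 0) = 1"
  by (simp_all add: moebius_mu_def)

lemma moebius_mu_cases: "moebius_mu k = 1 \<or> moebius_mu k = -1 \<or> moebius_mu k = 0"
  by (simp add: moebius_mu_def minus_one_power_iff)

lemma moebius_mu_prime_mult:
  assumes p: "prime (p :: nat)" and "d \<noteq> 0"
  shows "moebius_mu (p * d) = (if p dvd d then 0 else - moebius_mu d)"
proof (cases "p dvd d")
  case True
  then have "p ^ 2 dvd p * d" by (simp add: power2_eq_square)
  then have "\<not> squarefree (p * d)" using p by (intro not_squarefreeI) auto
  then show ?thesis using True by (simp add: moebius_mu_def)
next
  case False
  then have "coprime p d" using p by (simp add: prime_imp_coprime)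
  then have "squarefree (p * d) \<longleftrightarrow> squarefree d"
    using squarefree_mult_coprime squarefree_prime[OF p] squarefree_multD(2) by blast
  moreover have "prime_factors (p * d) = insert p (prime_factors d)"
    using p \<open>d \<noteq> 0\<close> by (simp add: prime_factors_product prime_prime_factors)
  moreover have "p \<notin> prime_factors d" using False by (auto dest: in_prime_factors_imp_dvd)
  ultimately show ?thesis using False by (simp add: moebius_mu_def)
qed

lemma sum_divisors_multiples:
  assumes "m > (0::nat)" "m dvd n" "n > 0"
  shows "(\<Sum>d\<in>{d. d dvd n \<and> m dvd d}. f d) = (\<Sum>j\<in>{j. j dvd n div m}. f (m * j))"
proof (rule sum.reindex_bij_witness[of _ "\<lambda>j. m * j" "\<lambda>d. d div m"])
  fix d assume d: "d \<in> {d. d dvd n \<and> m dvd d}"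
  then show "m * (d div m) = d" by auto
  from d obtain e where "d = m * e" by auto
  then show "d div m \<in> {j. j dvd n div m}" "f (m * (d div m)) = f d"
    using d assms by (auto simp: dvd_div_iff_mult mult.commute)
next
  fix j assume "j \<in> {j. j dvd n div m}"
  then show "m * j div m = j" "m * j \<in> {d. d dvd n \<and> m dvd d}"
    using assms by (auto simp: dvd_div_iff_mult mult.commute)
qed

lemma dvd_cofactor:
  fixes m n j :: nat
  assumes "m dvd n" "n > 0" "j dvd n div m"
  shows "j > 0" and "m * j dvd n"
proof -
  have "m * j dvd m * (n div m)" using assms(3) by (simp add: mult_dvd_mono)
  then show "m * j dvd n" using assms(1) by simp
  then show "j > 0" using assms(2) by (cases j) auto
qed

lemma sum_moebius_mu_divisors:
  assumes "N > (0::nat)"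
  shows "(\<Sum>d\<in>{d. d dvd N}. moebius_mu d) = (if N = 1 then 1 else 0)"
proof (cases "N = 1")
  case False
  then obtain p where p: "prime p" "p dvd N" using assms prime_factor_nat by blast
  have coprime_divisors: "{e. e dvd N div p \<and> \<not> p dvd e} = {e. e dvd N \<and> \<not> p dvd e}"
  proof -
    have "e * p dvd N" if "e dvd N" "\<not> p dvd e" for e
      using that p by (metis divides_mult mult.commute prime_imp_coprime)
    then show ?thesis using p by (auto simp: dvd_div_iff_mult intro: dvd_mult_left)
  qed
  have quotient_pos: "N div p \<noteq> 0"
    using p assms by (auto simp: dvd_div_eq_0_iff)
  have "(\<Sum>d | d dvd N \<and> p dvd d. moebius_mu d) = (\<Sum>e | e dvd N div p. moebius_mu (p * e))"
    using p assms by (intro sum_divisors_multiples) (auto simp: prime_gt_0_nat)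
  also have "\<dots> = (\<Sum>e | e dvd N div p. if p dvd e then 0 else - moebius_mu e)"
    using p quotient_pos by (intro sum.cong refl moebius_mu_prime_mult) auto
  also have "\<dots> = - (\<Sum>e | e dvd N \<and> \<not> p dvd e. moebius_mu e)"
    using quotient_pos by (simp add: sum.If_cases sum_negf Int_def coprime_divisors[symmetric])
  finally have "(\<Sum>d | d dvd N \<and> p dvd d. moebius_mu d) = - (\<Sum>e | e dvd N \<and> \<not> p dvd e. moebius_mu e)" .
  moreover have "(\<Sum>d | d dvd N. moebius_mu d) =
      (\<Sum>d | d dvd N \<and> p dvd d. moebius_mu d) + (\<Sum>d | d dvd N \<and> \<not> p dvd d. moebius_mu d)"
    using assms by (subst sum.Int_Diff[of _ _ "{d. p dvd d}"]) (simp_all add: Int_def set_diff_eq)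
  ultimately show ?thesis using False by simp
qed simp

lemma sum_divisors_cofactor:
  assumes "N > (0::nat)"
  shows "(\<Sum>d | d dvd N. f (N div d)) = (\<Sum>d | d dvd N. f d)"
  by (rule sum.reindex_bij_witness[of _ "\<lambda>d. N div d" "\<lambda>d. N div d"])
     (use assms in \<open>auto elim!: dvdE\<close>)

lemma sum_moebius_mu_cofactors:
  assumes "N > (0::nat)"
  shows "(\<Sum>d | d dvd N. moebius_mu (N div d)) = (if N = 1 then 1 else 0)"
  using sum_divisors_cofactor[OF assms, of moebius_mu] sum_moebius_mu_divisors[OF assms] by simp

lemma sum_moebius_mu_cofactors_multiples:
  assumes "r > (0::nat)" "N > 0"
  shows "(\<Sum>d | d dvd N \<and> r dvd d. moebius_mu (N div d)) = (if N = r then 1 else 0)"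
proof (cases "r dvd N")
  case True
  have "(\<Sum>d | d dvd N \<and> r dvd d. moebius_mu (N div d)) = (\<Sum>j | j dvd N div r. moebius_mu (N div (r * j)))"
    by (rule sum_divisors_multiples[OF assms(1) True assms(2)])
  also have "\<dots> = (\<Sum>j | j dvd N div r. moebius_mu ((N div r) div j))"
    by (simp only: div_mult2_eq)
  also have "\<dots> = (if N div r = 1 then 1 else 0)"
    using True assms by (intro sum_moebius_mu_cofactors) (auto simp: dvd_div_eq_0_iff)
  finally show ?thesis using True assms by auto
next
  case False
  then have no_multiples: "{d. d dvd N \<and> r dvd d} = {}" by (auto dest: dvd_trans)
  show ?thesis unfolding no_multiples using False by auto
qed

lemma prod_powi_moebius_mu:
  fixes x :: "'b \<Rightarrow> 'a::field"
  assumes "finite A"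
  shows "(\<Prod>d\<in>A. x d powi moebius_mu (f d)) =
         (\<Prod>d | d \<in> A \<and> moebius_mu (f d) = 1. x d) / (\<Prod>d | d \<in> A \<and> moebius_mu (f d) = -1. x d)"
proof -
  have "(\<Prod>d\<in>A. x d powi moebius_mu (f d)) =
        (\<Prod>d\<in>A. (if moebius_mu (f d) = 1 then x d else 1) / (if moebius_mu (f d) = -1 then x d else 1))"
  proof (rule prod.cong[OF refl])
    fix d
    show "x d powi moebius_mu (f d) =
          (if moebius_mu (f d) = 1 then x d else 1) / (if moebius_mu (f d) = -1 then x d else 1)"
      using moebius_mu_cases[of "f d"] by (elim disjE) (simp_all add: power_int_minus divide_inverse)
  qed
  then show ?thesis using assms by (simp add: prod_dividef prod.inter_filter[symmetric])
qed

lemma sum_moebius_mu_mult: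
  fixes y :: "'b \<Rightarrow> int"
  assumes "finite A"
  shows "(\<Sum>d\<in>A. moebius_mu (f d) * y d) =
         (\<Sum>d | d \<in> A \<and> moebius_mu (f d) = 1. y d) - (\<Sum>d | d \<in> A \<and> moebius_mu (f d) = -1. y d)"
proof -
  have "(\<Sum>d\<in>A. moebius_mu (f d) * y d) =
        (\<Sum>d\<in>A. if moebius_mu (f d) = 1 then y d else 0) - (\<Sum>d\<in>A. if moebius_mu (f d) = -1 then y d else 0)"
    unfolding sum_subtractf[symmetric]
    by (intro sum.cong refl) (use moebius_mu_cases in auto)
  then show ?thesis using assms by (simp add: sum.inter_filter[symmetric])
qed

lemma funpow_mult_fixed: "(f ^^ m) x = x \<Longrightarrow> (f ^^ (m * k)) x = x"
  by (induction k) (simp_all add: funpow_add)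

lemma funpow_eq_self_iff_least_power_dvd:
  assumes "(f ^^ n) x = x" "n > 0"
  shows "(f ^^ j) x = x \<longleftrightarrow> least_power f x dvd j"
proof
  assume "least_power f x dvd j"
  then obtain k where "j = least_power f x * k" by blast
  then show "(f ^^ j) x = x" using funpow_mult_fixed least_powerI(1)[OF assms] by metis
qed (rule least_power_minimal)

lemma least_power_eq_iff:
  assumes "(f ^^ n) x = x" "n > 0"
  shows "least_power f x = n \<longleftrightarrow> (\<forall>k. 0 < k \<and> k < n \<longrightarrow> (f ^^ k) x \<noteq> x)"
proof
  assume "least_power f x = n"
  then show "\<forall>k. 0 < k \<and> k < n \<longrightarrow> (f ^^ k) x \<noteq> x"
    using least_power_le[where f = f and x = x] by (metis not_less)
next
  assume "\<forall>k. 0 < k \<and> k < n \<longrightarrow> (f ^^ k) x \<noteq> x"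
  then show "least_power f x = n"
    using least_powerI[OF assms] least_power_le[OF assms] by (metis le_neq_implies_less)
qed

lemma power_eq_1_iff_least_power_dvd:
  fixes l :: "'a::monoid_mult"
  assumes "l ^ n = 1" "n > 0"
  shows "l ^ j = 1 \<longleftrightarrow> least_power ((*) l) 1 dvd j"
proof -
  have powers: "((*) l ^^ j) 1 = l ^ j" for j by (induction j) simp_all
  show ?thesis using funpow_eq_self_iff_least_power_dvd[where f = "(*) l" and x = 1] assms
    by (simp add: powers)
qed

section \<open>Iterated composition of formal power series\<close>

primrec fps_iterate :: "'a::field fps \<Rightarrow> nat \<Rightarrow> 'a fps" where
  "fps_iterate G 0 = fps_X"
| "fps_iterate G (Suc j) = fps_iterate G j oo G"

lemma fps_iterate_nth_0: "G $ 0 = 0 \<Longrightarrow> fps_iterate G j $ 0 = 0"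
  by (induction j) auto

lemma fps_compose_nth_1: "G $ 0 = 0 \<Longrightarrow> (F oo G) $ 1 = F $ 1 * G $ 1"
  by (simp add: fps_compose_nth numeral_2_eq_2)

lemma fps_compose_nth_2:
  assumes "G $ 0 = 0"
  shows "(F oo G) $ 2 = F $ 1 * G $ 2 + F $ 2 * (G $ 1) ^ 2"
proof -
  have "(G ^ 2) $ 2 = (G $ 1) ^ 2" using startsby_zero_power_nth_same[OF assms] .
  then show ?thesis using assms
    by (simp add: fps_compose_nth numeral_2_eq_2 atLeast0AtMost atMost_Suc add.commute)
qed

lemma fps_iterate_nth_1:
  assumes "G $ 0 = 0"
  shows "fps_iterate G j $ 1 = (G $ 1) ^ j"
proof (induction j)
  case (Suc j)
  then show ?case using fps_compose_nth_1[OF assms, of "fps_iterate G j"] by (simp add: mult.commute)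
qed simp

lemma fps_iterate_add:
  assumes "G $ 0 = 0"
  shows "fps_iterate G (a + b) = fps_iterate G a oo fps_iterate G b"
proof (induction b)
  case (Suc b)
  have "fps_iterate G (a + Suc b) = (fps_iterate G a oo fps_iterate G b) oo G"
    using Suc by simp
  also have "\<dots> = fps_iterate G a oo (fps_iterate G b oo G)"
    using assms fps_iterate_nth_0[OF assms] by (simp add: fps_compose_assoc)
  finally show ?case by simp
qed (use assms in simp)

lemma fps_iterate_mult:
  assumes "G $ 0 = 0"
  shows "fps_iterate G (a * b) = fps_iterate (fps_iterate G a) b"
proof (induction b)
  case (Suc b)
  have "fps_iterate G (a * Suc b) = fps_iterate G (a * b) oo fps_iterate G a"
    using fps_iterate_add[OF assms, of "a * b" a] by (simp add: add.commute)
  then show ?case using Suc by simp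
qed simp

lemma fps_iterate_Suc_nth_2:
  assumes G0: "G $ 0 = 0"
  shows "fps_iterate G (Suc j) $ 2 = G $ 2 * (G $ 1) ^ j * (\<Sum>i<Suc j. (G $ 1) ^ i)"
proof (induction j)
  case (Suc j)
  let ?l = "G $ 1"
  have "fps_iterate G (Suc (Suc j)) $ 2 = ?l ^ Suc j * G $ 2 + fps_iterate G (Suc j) $ 2 * ?l ^ 2"
    using G0 fps_iterate_nth_1[OF G0, of "Suc j"] by (simp add: fps_compose_nth_2)
  also have "\<dots> = G $ 2 * ?l ^ Suc j * (1 + ?l * (\<Sum>i<Suc j. ?l ^ i))"
    unfolding Suc by (simp add: algebra_simps power2_eq_square sum_distrib_left)
  also have "1 + ?l * (\<Sum>i<Suc j. ?l ^ i) = (\<Sum>i<Suc (Suc j). ?l ^ i)"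
    unfolding sum.lessThan_Suc_shift[of _ "Suc j"] by (simp add: sum_distrib_left distrib_left)
  finally show ?case .
qed (use G0 in simp)

lemma fps_iterate_nth_2_root_of_unity:
  assumes "G $ 0 = 0" and "r > 0" and "(G $ 1) ^ r = 1" and "G $ 1 \<noteq> 1"
  shows "fps_iterate G r $ 2 = 0"
proof -
  have "(\<Sum>i<r. (G $ 1) ^ i) = 0" using assms by (simp add: sum_gp_strict)
  then show ?thesis
    using fps_iterate_Suc_nth_2[OF assms(1), of "r - 1"] assms(2) by simp
qed

lemma fps_compose_tangent_to_identity:
  assumes "F $ 0 = 0" "F $ 1 = 1" "\<And>i. i < \<nu> \<Longrightarrow> R $ i = 0"
  shows "i < \<nu> \<Longrightarrow> (R oo F) $ i = 0" and "(R oo F) $ \<nu> = R $ \<nu>"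
proof -
  show "(R oo F) $ i = 0" if "i < \<nu>"
    using assms that by (auto simp: fps_compose_nth intro!: sum.neutral)
  have "(R oo F) $ \<nu> = (\<Sum>i\<in>{0..\<nu>}. R $ i * (F ^ i) $ \<nu>)" by (simp add: fps_compose_nth)
  also have "\<dots> = R $ \<nu> * (F ^ \<nu>) $ \<nu>"
    by (subst sum.remove[of _ \<nu>]) (use assms in \<open>auto intro!: sum.neutral\<close>)
  finally show "(R oo F) $ \<nu> = R $ \<nu>"
    using assms by (simp add: startsby_zero_power_nth_same)
qed

lemma fps_iterate_tangent_to_identity:
  assumes H0: "H $ 0 = 0" and H1: "H $ 1 = 1"
    and low: "\<And>i. 1 < i \<Longrightarrow> i < \<nu> \<Longrightarrow> H $ i = 0" and "\<nu> \<ge> 2"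
  shows "(\<forall>i. 1 < i \<and> i < \<nu> \<longrightarrow> fps_iterate H j $ i = 0) \<and>
         fps_iterate H j $ \<nu> = of_nat j * H $ \<nu>"
proof (induction j)
  case (Suc j)
  define R where "R = H - fps_X"
  have R_low: "R $ i = 0" if "i < \<nu>" for i
    using that H0 H1 low by (cases "i = 0"; cases "i = 1") (auto simp: R_def)
  have F0: "fps_iterate H j $ 0 = 0" and F1: "fps_iterate H j $ 1 = 1"
    using fps_iterate_nth_0[OF H0] fps_iterate_nth_1[OF H0] H1 by simp_all
  have "fps_iterate H (Suc j) = (fps_X + R) oo fps_iterate H j"
    using fps_iterate_add[OF H0, of 1 j] H0 by (simp add: R_def)
  also have "\<dots> = fps_iterate H j + (R oo fps_iterate H j)"
    using F0 by (simp add: fps_compose_add_distrib)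
  finally have "fps_iterate H (Suc j) = fps_iterate H j + (R oo fps_iterate H j)" .
  moreover note fps_compose_tangent_to_identity[OF F0 F1 R_low]
  moreover have "R $ \<nu> = H $ \<nu>" using \<open>\<nu> \<ge> 2\<close> by (simp add: R_def)
  ultimately show ?case using Suc.IH by (simp add: distrib_right)
qed (use \<open>\<nu> \<ge> 2\<close> in auto)

lemma subdegree_X_minus_fps_iterate_nonresonant:
  assumes G0: "G $ 0 = 0" and "(G $ 1) ^ j \<noteq> 1"
  shows "subdegree (fps_X - fps_iterate G j) = 1"
proof (rule subdegreeI)
  show "(fps_X - fps_iterate G j) $ 1 \<noteq> 0"
    using assms(2) fps_iterate_nth_1[OF G0, of j] by simp
  show "(fps_X - fps_iterate G j) $ i = 0" if "i < 1" for i
    using that fps_iterate_nth_0[OF G0, of j] by simp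
qed

lemma subdegree_fps_minus_X_ge_2:
  fixes H :: "'a::field fps"
  assumes "H $ 0 = 0" "H $ 1 = 1" "H \<noteq> fps_X"
  shows "subdegree (H - fps_X) \<ge> 2"
proof -
  have "(H - fps_X) $ subdegree (H - fps_X) \<noteq> 0"
    by (rule nth_subdegree_nonzero) (use assms(3) in simp)
  moreover have "(H - fps_X) $ 0 = 0" "(H - fps_X) $ 1 = 0" using assms(1,2) by simp_all
  ultimately have "subdegree (H - fps_X) \<noteq> 0" "subdegree (H - fps_X) \<noteq> 1" by metis+
  then show ?thesis by linarith
qed

lemma subdegree_X_minus_fps_iterate_tangent:
  fixes H :: "'a::field_char_0 fps"
  assumes H0: "H $ 0 = 0" and H1: "H $ 1 = 1" and "H \<noteq> fps_X" and "k > 0"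
  shows "subdegree (fps_X - fps_iterate H k) = subdegree (H - fps_X)"
proof -
  define \<nu> where "\<nu> = subdegree (H - fps_X)"
  have \<nu>2: "\<nu> \<ge> 2" unfolding \<nu>_def by (rule subdegree_fps_minus_X_ge_2[OF assms(1-3)])
  have "(H - fps_X) $ \<nu> \<noteq> 0"
    unfolding \<nu>_def by (rule nth_subdegree_nonzero) (use assms(3) in simp)
  then have H\<nu>: "H $ \<nu> \<noteq> 0" using \<nu>2 by simp
  have low: "H $ i = 0" if "1 < i" "i < \<nu>" for i
    using that nth_less_subdegree_zero[of i "H - fps_X"] by (simp add: \<nu>_def)
  note tangent = fps_iterate_tangent_to_identity[OF H0 H1 low \<nu>2, of k]
  show ?thesis unfolding \<nu>_def[symmetric]
  proof (rule subdegreeI)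
    show "(fps_X - fps_iterate H k) $ \<nu> \<noteq> 0" using tangent \<nu>2 H\<nu> \<open>k > 0\<close> by simp
    show "(fps_X - fps_iterate H k) $ i = 0" if "i < \<nu>" for i
    proof -
      consider "i = 0" | "i = 1" | "1 < i" by linarith
      then show ?thesis
        using that tangent fps_iterate_nth_0[OF H0, of k] fps_iterate_nth_1[OF H0, of k] H1
        by cases simp_all
    qed
  qed
qed

lemma subdegree_fps_iterate_minus_X_resonant:
  fixes G :: "'a::field fps"
  assumes G0: "G $ 0 = 0" and "r \<ge> 2" and resonance: "\<And>j. (G $ 1) ^ j = 1 \<longleftrightarrow> r dvd j"
    and not_id: "fps_iterate G r \<noteq> fps_X"
  shows "subdegree (fps_iterate G r - fps_X) \<ge> 3"
proof -
  let ?H = "fps_iterate G r"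
  have H0: "?H $ 0 = 0" and H1: "?H $ 1 = 1"
    using fps_iterate_nth_0[OF G0] fps_iterate_nth_1[OF G0, of r] resonance[of r] by simp_all
  have "G $ 1 \<noteq> 1" using resonance[of 1] \<open>r \<ge> 2\<close> by auto
  then have "(?H - fps_X) $ 2 = 0"
    using fps_iterate_nth_2_root_of_unity[OF G0] resonance[of r] \<open>r \<ge> 2\<close> by simp
  moreover have "(?H - fps_X) $ subdegree (?H - fps_X) \<noteq> 0"
    by (rule nth_subdegree_nonzero) (use not_id in simp)
  ultimately show ?thesis using subdegree_fps_minus_X_ge_2[OF H0 H1 not_id]
    by (cases "subdegree (?H - fps_X) = 2") auto
qed

lemma moebius_sum_subdegree_nonresonant:
  fixes G :: "'a::field fps"
  assumes G0: "G $ 0 = 0" and "N > 0" and "\<forall>j. j dvd N \<longrightarrow> (G $ 1) ^ j \<noteq> 1"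
  shows "(\<Sum>j | j dvd N. moebius_mu (N div j) * int (subdegree (fps_X - fps_iterate G j))) =
         (if N = 1 then 1 else 0)"
proof -
  have "(\<Sum>j | j dvd N. moebius_mu (N div j) * int (subdegree (fps_X - fps_iterate G j))) =
        (\<Sum>j | j dvd N. moebius_mu (N div j))"
    using assms(3) by (intro sum.cong refl) (simp add: subdegree_X_minus_fps_iterate_nonresonant[OF G0])
  then show ?thesis using sum_moebius_mu_cofactors[OF \<open>N > 0\<close>] by simp
qed

lemma moebius_sum_subdegree_resonant:
  fixes G :: "'a::field_char_0 fps"
  assumes G0: "G $ 0 = 0" and "N > 0" and "r dvd N" "r > 0"
    and resonance: "\<And>j. (G $ 1) ^ j = 1 \<longleftrightarrow> r dvd j"
    and not_id: "fps_iterate G r \<noteq> fps_X"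
  defines "\<nu> \<equiv> subdegree (fps_iterate G r - fps_X)"
  shows "(\<Sum>j | j dvd N. moebius_mu (N div j) * int (subdegree (fps_X - fps_iterate G j))) =
         (if N = 1 then 1 else 0) + (if N = r then int \<nu> - 1 else 0)"
proof -
  let ?H = "fps_iterate G r"
  have H0: "?H $ 0 = 0" and H1: "?H $ 1 = 1"
    using fps_iterate_nth_0[OF G0] fps_iterate_nth_1[OF G0, of r] resonance[of r] by simp_all
  have subdegree: "int (subdegree (fps_X - fps_iterate G j)) = 1 + (if r dvd j then int \<nu> - 1 else 0)"
    if "j dvd N" for j
  proof (cases "r dvd j")
    case True
    then obtain k where k: "j = r * k" by blast
    then have "k > 0" using that \<open>N > 0\<close> by (cases k) auto
    moreover have "fps_iterate G j = fps_iterate ?H k" unfolding k by (rule fps_iterate_mult[OF G0])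
    ultimately show ?thesis
      using subdegree_X_minus_fps_iterate_tangent[OF H0 H1 not_id] True by (simp add: \<nu>_def)
  qed (use subdegree_X_minus_fps_iterate_nonresonant[OF G0] resonance in simp)
  have multiples: "{j \<in> {j. j dvd N}. r dvd j} = {j. j dvd N \<and> r dvd j}" by blast
  have "(\<Sum>j | j dvd N. moebius_mu (N div j) * int (subdegree (fps_X - fps_iterate G j))) =
        (\<Sum>j | j dvd N. moebius_mu (N div j)) +
        (\<Sum>j | j dvd N. if r dvd j then moebius_mu (N div j) * (int \<nu> - 1) else 0)"
    unfolding sum.distrib[symmetric] by (intro sum.cong refl) (simp add: subdegree distrib_left)
  also have "(\<Sum>j | j dvd N. if r dvd j then moebius_mu (N div j) * (int \<nu> - 1) else 0) =
             (\<Sum>j | j dvd N \<and> r dvd j. moebius_mu (N div j)) * (int \<nu> - 1)"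
    using \<open>N > 0\<close> by (simp add: sum.inter_filter[symmetric] multiples sum_distrib_right)
  finally show ?thesis
    using sum_moebius_mu_cofactors[OF \<open>N > 0\<close>] sum_moebius_mu_cofactors_multiples[OF \<open>r > 0\<close> \<open>N > 0\<close>]
    by simp
qed

lemma moebius_sum_subdegree_iterates:
  fixes G :: "'a::field_char_0 fps"
  assumes G0: "G $ 0 = 0" and "N > 0" and not_id: "\<And>j. j dvd N \<Longrightarrow> fps_iterate G j \<noteq> fps_X"
  defines "V \<equiv> (\<Sum>j | j dvd N. moebius_mu (N div j) * int (subdegree (fps_X - fps_iterate G j)))"
  shows "(N = 1 \<longrightarrow> V \<ge> 1) \<and> (N \<noteq> 1 \<longrightarrow> V = 0 \<or> V \<ge> 2)"
proof (cases "\<exists>j. j dvd N \<and> (G $ 1) ^ j = 1")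
  case False
  then show ?thesis
    unfolding V_def using moebius_sum_subdegree_nonresonant[OF G0 \<open>N > 0\<close>] by auto
next
  case True
  then obtain j0 where j0: "j0 dvd N" "(G $ 1) ^ j0 = 1" by blast
  have "j0 > 0" using j0 \<open>N > 0\<close> by (cases j0) auto
  define r where "r = least_power ((*) (G $ 1)) 1"
  have resonance: "(G $ 1) ^ j = 1 \<longleftrightarrow> r dvd j" for j
    unfolding r_def using power_eq_1_iff_least_power_dvd[OF j0(2) \<open>j0 > 0\<close>] .
  have "r > 0" using resonance[of 0] resonance[of j0] j0 \<open>j0 > 0\<close>
    by (metis dvd_0_left_iff gr0I)
  have "r dvd N" using resonance j0 dvd_trans by blast
  let ?H = "fps_iterate G r"
  define \<nu> where "\<nu> = subdegree (?H - fps_X)"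
  have H_not_id: "?H \<noteq> fps_X" using not_id \<open>r dvd N\<close> by blast
  have H0: "?H $ 0 = 0" and H1: "?H $ 1 = 1"
    using fps_iterate_nth_0[OF G0] fps_iterate_nth_1[OF G0, of r] resonance[of r] by simp_all
  have \<nu>2: "\<nu> \<ge> 2" unfolding \<nu>_def by (rule subdegree_fps_minus_X_ge_2[OF H0 H1 H_not_id])
  have V: "V = (if N = 1 then 1 else 0) + (if N = r then int \<nu> - 1 else 0)"
    unfolding V_def \<nu>_def
    by (rule moebius_sum_subdegree_resonant[OF G0 \<open>N > 0\<close> \<open>r dvd N\<close> \<open>r > 0\<close> resonance H_not_id])
  have "\<nu> \<ge> 3" if "N = r" "N \<noteq> 1"
    unfolding \<nu>_def using that \<open>r > 0\<close>
    by (intro subdegree_fps_iterate_minus_X_resonant[OF G0 _ resonance H_not_id]) simp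
  then show ?thesis using V \<nu>2 by auto
qed

interpretation to_ac_hom: field_hom to_ac
  by unfold_locales auto

interpretation to_ac_poly_hom: map_poly_inj_idom_hom to_ac ..

abbreviation to_ac_poly :: "'k::field poly \<Rightarrow> 'k alg_closure poly" where
  "to_ac_poly \<equiv> map_poly to_ac"

lemma poly_combination_dvd_both:
  fixes p q :: "'a::field poly"
  shows "\<exists>s t. s * p + t * q dvd p \<and> s * p + t * q dvd q"
proof (induction q arbitrary: p rule: measure_induct_rule[of euclidean_size])
  case (less q)
  show ?case
  proof (cases "q = 0")
    case True
    then show ?thesis by (intro exI[of _ 1] exI[of _ 0]) simp
  next
    case False
    then obtain s t where st: "s * q + t * (p mod q) dvd q" "s * q + t * (p mod q) dvd p mod q"
      using less mod_size_less by blast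
    have "s * q + t * (p mod q) = t * p + (s - t * (p div q)) * q"
      by (simp add: minus_div_mult_eq_mod[symmetric] algebra_simps)
    moreover have "s * q + t * (p mod q) dvd p"
      using st by (metis div_mult_mod_eq dvd_add dvd_mult)
    ultimately show ?thesis using st(1) by metis
  qed
qed

lemma coprime_imp_no_common_root_ac:
  fixes p q :: "'k::field poly"
  assumes "coprime p q"
  shows "poly (to_ac_poly p) a \<noteq> 0 \<or> poly (to_ac_poly q) a \<noteq> 0"
proof -
  obtain s t where "s * p + t * q dvd p" "s * p + t * q dvd q"
    using poly_combination_dvd_both by blast
  then have "is_unit (s * p + t * q)" using assms by (meson coprime_common_divisor)
  then obtain c where c: "s * p + t * q = [:c:]" "c \<noteq> 0"
    using is_unit_poly_iff[of "s * p + t * q"] by auto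
  have "to_ac_poly (s * p + t * q) = [:to_ac c:]"
    unfolding c(1) by (simp add: hom_distribs)
  then have "to_ac_poly s * to_ac_poly p + to_ac_poly t * to_ac_poly q = [:to_ac c:]"
    by (simp add: hom_distribs)
  then have "poly (to_ac_poly s) a * poly (to_ac_poly p) a + poly (to_ac_poly t) a * poly (to_ac_poly q) a
      = to_ac c"
    by (metis poly_add poly_const_conv poly_mult)
  then show ?thesis using c(2) by auto
qed

lemma poly_eq_0_if_cofinite_roots:
  fixes F :: "'a::{idom,ring_char_0} poly"
  assumes "finite B" and "\<And>x. x \<notin> B \<Longrightarrow> poly F x = 0"
  shows "F = 0"
proof (rule ccontr)
  assume "F \<noteq> 0"
  then have "finite (B \<union> {x. poly F x = 0})" using assms(1) poly_roots_finite by blast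
  moreover have "B \<union> {x. poly F x = 0} = UNIV" using assms(2) by auto
  ultimately show False using infinite_UNIV_char_0 by metis
qed

definition proj_eval :: "'a::field poly \<Rightarrow> 'a poly \<Rightarrow> 'a \<Rightarrow> 'a option" where
  "proj_eval U V a = (if poly V a \<noteq> 0 then Some (poly U a / poly V a) else None)"

lemma proj_eval_eq_if_cross_eq:
  assumes cross: "U * V' = U' * V"
    and "poly U a \<noteq> 0 \<or> poly V a \<noteq> 0" and "poly U' a \<noteq> 0 \<or> poly V' a \<noteq> 0"
  shows "proj_eval U V a = proj_eval U' V' a"
proof -
  have "poly U a * poly V' a = poly U' a * poly V a"
    using arg_cong[OF cross, of "\<lambda>f. poly f a"] by simp
  then show ?thesis using assms(2,3) by (auto simp: proj_eval_def frac_eq_eq)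
qed

lemma proj_eval_const:
  assumes "degree U = 0" "degree V = 0"
  shows "proj_eval U V a = proj_eval U V b"
  using assms by (simp add: proj_eval_def poly_altdef)

lemma constant_combination_unique:
  fixes U V :: "'a::field poly"
  assumes nonconst: "degree U \<noteq> 0 \<or> degree V \<noteq> 0"
    and "degree (U - smult b V) = 0" and "degree (U - smult c V) = 0"
  shows "b = c"
proof (rule ccontr)
  assume "b \<noteq> c"
  have "smult (c - b) V = (U - smult b V) - (U - smult c V)" by (simp add: smult_diff_left)
  then have "degree (smult (c - b) V) = 0"
    using degree_diff_le[of "U - smult b V" 0 "U - smult c V"] assms(2,3) by simp
  then have "degree V = 0" using \<open>b \<noteq> c\<close> by simp
  moreover have "degree U \<le> max (degree (U - smult b V)) (degree (smult b V))"
    using degree_add_le_max[of "U - smult b V" "smult b V"] by simp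
  ultimately show False using nonconst assms(2) by (simp split: if_splits)
qed

text \<open>Over an algebraically closed field every \<open>b\<close> with \<open>U - b V\<close> nonconstant is a value of
  \<open>U/V\<close>, and at most one \<open>b\<close> makes \<open>U - b V\<close> constant.\<close>
lemma infinite_proj_eval_values:
  fixes U V :: "'a::{alg_closed_field,field_char_0} poly"
  assumes no_common_root: "\<And>a. poly U a \<noteq> 0 \<or> poly V a \<noteq> 0"
    and nonconst: "degree U \<noteq> 0 \<or> degree V \<noteq> 0"
  shows "infinite {b. \<exists>a. proj_eval U V a = Some b}"
proof
  assume finite_range: "finite {b. \<exists>a. proj_eval U V a = Some b}"
  have "b \<in> {b. \<exists>a. proj_eval U V a = Some b}" if "degree (U - smult b V) \<noteq> 0" for b
  proof -
    from that have "degree (U - smult b V) > 0" by simp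
    then obtain a where a: "poly (U - smult b V) a = 0"
      using alg_closed_imp_poly_has_root by blast
    then have "poly V a \<noteq> 0" using no_common_root[of a] by auto
    then show ?thesis using a by (auto simp: proj_eval_def field_simps)
  qed
  then have "UNIV = {b. \<exists>a. proj_eval U V a = Some b} \<union> {b. degree (U - smult b V) = 0}"
    by blast
  moreover have "finite {b. degree (U - smult b V) = 0}"
  proof (cases "\<exists>b. degree (U - smult b V) = 0")
    case True
    then obtain b where "degree (U - smult b V) = 0" by blast
    then have "{b. degree (U - smult b V) = 0} \<subseteq> {b}"
      using constant_combination_unique[OF nonconst] by blast
    then show ?thesis by (rule finite_subset) simp
  next
    case False
    then have "{b. degree (U - smult b V) = 0} = {}" by blast
    then show ?thesis by (metis finite.emptyI)
  qed
  ultimately have "finite (UNIV :: 'a set)" using finite_range by (metis finite_Un)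
  then show False using infinite_UNIV_char_0 by blast
qed

lemma order_prod:
  fixes f :: "'b \<Rightarrow> 'a::idom poly"
  assumes "finite A" "\<And>x. x \<in> A \<Longrightarrow> f x \<noteq> 0"
  shows "order a (prod f A) = (\<Sum>x\<in>A. order a (f x))"
  using assms by (induction A rule: finite_induct) (auto simp: order_mult)

lemma dvd_if_order_le:
  fixes f g :: "'a::alg_closed_field poly"
  assumes "f \<noteq> 0" "g \<noteq> 0" "\<And>a. order a f \<le> order a g"
  shows "f dvd g"
  using assms
proof (induction "degree f" arbitrary: f g rule: less_induct)
  case less
  show ?case
  proof (cases "degree f = 0")
    case True
    then obtain c where "f = [:c:]" "c \<noteq> 0" using less.prems(1) by (metis degree_eq_zeroE pCons_0_0)
    then have "is_unit f" by (simp add: is_unit_const_poly_iff)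
    then show ?thesis by (rule unit_imp_dvd)
  next
    case False
    then obtain a where "poly f a = 0" using alg_closed_imp_poly_has_root by blast
    then obtain f' where f: "f = [:- a, 1:] * f'" by (metis poly_eq_0_iff_dvd dvdE)
    have "order a g \<noteq> 0"
      using less.prems \<open>poly f a = 0\<close> order_root[of f a] by (metis le_zero_eq)
    then obtain g' where g: "g = [:- a, 1:] * g'"
      using order_root[of g a] by (metis poly_eq_0_iff_dvd dvdE)
    have "f' \<noteq> 0" "g' \<noteq> 0" using f g less.prems(1,2) by auto
    moreover have "order b f' \<le> order b g'" for b
      using less.prems order_mult[of "[:- a, 1:]" f' b] order_mult[of "[:- a, 1:]" g' b] f g
      by (metis add_le_cancel_left)
    moreover have "degree f = degree f' + 1"
      unfolding f using \<open>f' \<noteq> 0\<close> by (subst degree_mult_eq) auto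
    ultimately have "f' dvd g'" using less.hyps by fastforce
    then show ?thesis unfolding f g by (rule mult_dvd_mono[OF dvd_refl])
  qed
qed

lemma rsquarefree_to_ac_poly_if_discriminant_nonzero:
  fixes f :: "'k::field_char_0 poly"
  assumes "poly_discriminant f \<noteq> 0"
  shows "rsquarefree (to_ac_poly f)"
  unfolding rsquarefree_roots
proof (intro allI notI)
  fix a assume a: "poly (to_ac_poly f) a = 0 \<and> poly (pderiv (to_ac_poly f)) a = 0"
  have "resultant (to_ac_poly f) (pderiv (to_ac_poly f)) = to_ac (resultant f (pderiv f))"
    by (simp add: to_ac_hom.resultant_hom to_ac_hom.map_poly_pderiv[symmetric])
  moreover have "resultant f (pderiv f) \<noteq> 0" using assms by (auto simp: poly_discriminant_def)
  ultimately have "resultant (to_ac_poly f) (pderiv (to_ac_poly f)) \<noteq> 0" by simp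
  then have "degree (gcd (to_ac_poly f) (pderiv (to_ac_poly f))) = 0"
    using resultant_0_gcd by blast
  moreover have "[:- a, 1:] dvd gcd (to_ac_poly f) (pderiv (to_ac_poly f))"
    using a by (simp add: poly_eq_0_iff_dvd)
  moreover have "f \<noteq> 0" using assms by (auto simp: poly_discriminant_def)
  then have "gcd (to_ac_poly f) (pderiv (to_ac_poly f)) \<noteq> 0" by simp
  ultimately have "degree [:- a, 1:] \<le> 0" by (metis dvd_imp_degree_le)
  then show False by simp
qed

section \<open>Homogenization and Taylor expansion\<close>

text \<open>\<open>homogenize D f u v\<close> is \<open>v\<^sup>D f(u/v)\<close>, computed without division.\<close>
definition homogenize :: "nat \<Rightarrow> 'a::comm_ring_1 poly \<Rightarrow> 'a poly \<Rightarrow> 'a poly \<Rightarrow> 'a poly" where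
  "homogenize D f u v = (\<Sum>i\<le>D. smult (coeff f i) (u ^ i * v ^ (D - i)))"

lemma poly_eq_sum_upto:
  fixes f :: "'a::comm_semiring_1 poly"
  assumes "degree f \<le> D"
  shows "poly f x = (\<Sum>i\<le>D. coeff f i * x ^ i)"
  unfolding poly_altdef
  by (rule sum.mono_neutral_left) (use assms in \<open>auto simp: coeff_eq_0\<close>)

lemma hom_homogenize:
  fixes hom :: "'a::comm_ring_1 poly \<Rightarrow> 'b::comm_ring_1"
  assumes "comm_ring_hom hom" and "degree f \<le> D" and "hom u = hom v * S"
  shows "hom (homogenize D f u v) = hom v ^ D * poly (map_poly (\<lambda>c. hom [:c:]) f) S"
proof -
  interpret comm_ring_hom hom by fact
  have "degree (map_poly (\<lambda>c. hom [:c:]) f) \<le> D"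
    using degree_map_poly_le assms(2) order_trans by blast
  then have "hom v ^ D * poly (map_poly (\<lambda>c. hom [:c:]) f) S =
      (\<Sum>i\<le>D. hom v ^ D * (hom [:coeff f i:] * S ^ i))"
    by (simp add: poly_eq_sum_upto coeff_map_poly sum_distrib_left)
  also have "\<dots> = (\<Sum>i\<le>D. hom [:coeff f i:] * hom u ^ i * hom v ^ (D - i))"
  proof (rule sum.cong[OF refl])
    fix i assume "i \<in> {..D}"
    then have "hom v ^ D = hom v ^ i * hom v ^ (D - i)" by (simp flip: power_add)
    then show "hom v ^ D * (hom [:coeff f i:] * S ^ i) = hom [:coeff f i:] * hom u ^ i * hom v ^ (D - i)"
      using assms(3) by (simp add: power_mult_distrib mult_ac)
  qed
  also have "\<dots> = hom (homogenize D f u v)"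
  proof -
    have "smult c w = [:c:] * w" for c and w :: "'a poly" by simp
    then show ?thesis by (simp only: homogenize_def hom_distribs mult.assoc)
  qed
  finally show ?thesis by simp
qed

lemma to_ac_poly_homogenize:
  "to_ac_poly (homogenize D f u v) = homogenize D (to_ac_poly f) (to_ac_poly u) (to_ac_poly v)"
  by (simp add: homogenize_def hom_distribs)

lemma poly_homogenize_nonzero_denom:
  fixes f u v :: "'a::field poly"
  assumes "degree f \<le> D" and "poly v a \<noteq> 0"
  shows "poly (homogenize D f u v) a = poly v a ^ D * poly f (poly u a / poly v a)"
  using hom_homogenize[OF poly_hom.comm_ring_hom_axioms assms(1), of u a v "poly u a / poly v a"] assms(2)
  by simp

lemma poly_homogenize_zero_denom:
  assumes "poly v a = 0"
  shows "poly (homogenize D f u v) a = coeff f D * poly u a ^ D"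
proof -
  have "poly (homogenize D f u v) a = (\<Sum>i\<le>D. coeff f i * poly u a ^ i * poly v a ^ (D - i))"
    by (simp add: homogenize_def poly_sum mult.assoc)
  also have "\<dots> = coeff f D * poly u a ^ D"
    by (subst sum.remove[of _ D]) (use assms in \<open>auto simp: power_0_left intro!: sum.neutral\<close>)
  finally show ?thesis .
qed

lemma rat_subst_fraction:
  fixes p q u v :: "'a::field poly"
  assumes "v \<noteq> 0" "degree p \<le> D" "degree q \<le> D"
  shows "rat_subst p q (to_fract u / to_fract v) =
         to_fract (homogenize D p u v) / to_fract (homogenize D q u v)"
proof -
  have rat_const: "(\<lambda>c. to_fract [:c:]) = rat_const" by (simp add: rat_const_def fun_eq_iff)
  have "to_fract u = to_fract v * (to_fract u / to_fract v)" using assms(1) by simp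
  note homogenize = hom_homogenize[OF to_fract_hom.comm_ring_hom_axioms _ this, unfolded rat_const]
  show ?thesis
    unfolding rat_subst_def homogenize[OF assms(2)] homogenize[OF assms(3)] using assms(1) by simp
qed

lemma to_fract_cross_eq:
  fixes a b c d :: "'a::idom"
  assumes "b \<noteq> 0" "d \<noteq> 0" "to_fract a / to_fract b = to_fract c / to_fract d"
  shows "a * d = c * b"
proof -
  have "to_fract a * to_fract d = to_fract c * to_fract b"
    using assms by (simp add: frac_eq_eq)
  then show ?thesis by (simp only: to_fract_mult[symmetric] to_fract_eq_iff)
qed

definition taylor_fps :: "'a::field \<Rightarrow> 'a poly \<Rightarrow> 'a fps" where
  "taylor_fps a f = fps_of_poly (pcompose f [:a, 1:])"

interpretation taylor_fps_hom: comm_ring_hom "taylor_fps a" for a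
  by unfold_locales
    (simp_all add: taylor_fps_def pcompose_add pcompose_mult fps_of_poly_add fps_of_poly_mult)

lemma taylor_fps_const [simp]: "taylor_fps a [:c:] = fps_const c"
  by (simp add: taylor_fps_def fps_of_poly_const)

lemma taylor_fps_X [simp]: "taylor_fps a [:0, 1:] = fps_const a + fps_X"
  by (simp add: taylor_fps_def pcompose_pCons fps_of_poly_linear)

lemma taylor_fps_linear_factor: "taylor_fps a [:- a, 1:] = fps_X"
proof -
  have "[:- a, 1:] = [:0, 1:] - [:a:]" by simp
  then show ?thesis by (simp only: taylor_fps_hom.hom_minus taylor_fps_X taylor_fps_const) simp
qed

lemma taylor_fps_nth_0 [simp]: "taylor_fps a f $ 0 = poly f a"
  by (simp add: taylor_fps_def poly_0_coeff_0[symmetric] poly_pcompose)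

lemma taylor_fps_eq_0_iff [simp]: "taylor_fps a f = 0 \<longleftrightarrow> f = 0"
  by (auto simp: taylor_fps_def fps_of_poly_eq_iff[of _ 0, simplified] pcompose_eq_0)

lemma subdegree_taylor_fps:
  assumes "f \<noteq> 0"
  shows "subdegree (taylor_fps a f) = order a f"
proof -
  obtain h where h: "f = [:- a, 1:] ^ order a f * h" "\<not> [:- a, 1:] dvd h"
    using order_decomp[OF assms] by blast
  then have "taylor_fps a h $ 0 \<noteq> 0" by (simp add: poly_eq_0_iff_dvd)
  then have "taylor_fps a h \<noteq> 0" "subdegree (taylor_fps a h) = 0"
    by (auto simp: subdegree_eq_0_iff)
  moreover have "taylor_fps a f = fps_X ^ order a f * taylor_fps a h"
    by (subst h(1)) (simp only: taylor_fps_hom.hom_mult taylor_fps_hom.hom_power taylor_fps_linear_factor)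
  ultimately show ?thesis by (simp add: subdegree_eq_0_iff)
qed

lemma taylor_fps_compose:
  assumes "T $ 0 = 0"
  shows "taylor_fps a f oo T = poly (map_poly fps_const f) (fps_const a + T)"
proof (induction f)
  case (pCons c f)
  have "pCons c f = [:c:] + [:0, 1:] * f" by simp
  then have "taylor_fps a (pCons c f) = fps_const c + (fps_const a + fps_X) * taylor_fps a f"
    by (simp only: hom_distribs taylor_fps_const taylor_fps_X)
  then show ?case using pCons assms
    by (simp add: fps_compose_add_distrib fps_compose_mult_distrib map_poly_pCons)
qed simp

lemma taylor_fps_homogenize:
  assumes "degree f \<le> D" "taylor_fps a u = taylor_fps a v * S"
  shows "taylor_fps a (homogenize D f u v) = taylor_fps a v ^ D * poly (map_poly fps_const f) S"
  using hom_homogenize[OF taylor_fps_hom.comm_ring_hom_axioms assms] by simp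

locale nonconstant_rational_map =
  fixes p q :: "'k::field_char_0 poly"
  assumes nonconst_ratfun: "nonconst_ratfun p q"
begin

abbreviation \<phi> :: "'k alg_closure option \<Rightarrow> 'k alg_closure option" where
  "\<phi> \<equiv> phi_P1 p q"

abbreviation deg_\<phi> :: nat where
  "deg_\<phi> \<equiv> max (degree p) (degree q)"

lemma denom_nonzero: "q \<noteq> 0"
  and nonconstant: "degree p \<noteq> 0 \<or> degree q \<noteq> 0"
  and no_common_root: "poly (to_ac_poly p) b \<noteq> 0 \<or> poly (to_ac_poly q) b \<noteq> 0"
  using nonconst_ratfun coprime_imp_no_common_root_ac by (auto simp: nonconst_ratfun_def)

lemma coeff_deg_\<phi>_nonzero: "coeff p deg_\<phi> \<noteq> 0 \<or> coeff q deg_\<phi> \<noteq> 0"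
  using denom_nonzero nonconstant by (cases "degree q \<le> degree p") (auto simp: max_def)

lemma \<phi>_Some: "\<phi> (Some b) = proj_eval (to_ac_poly p) (to_ac_poly q) b"
  by (simp add: phi_P1_def proj_eval_def)

lemma \<phi>_proj_eval:
  assumes uv: "poly u a \<noteq> 0 \<or> poly v a \<noteq> 0"
  defines "Hp \<equiv> homogenize deg_\<phi> (to_ac_poly p) u v" and "Hq \<equiv> homogenize deg_\<phi> (to_ac_poly q) u v"
  shows "\<phi> (proj_eval u v a) = proj_eval Hp Hq a" and "poly Hp a \<noteq> 0 \<or> poly Hq a \<noteq> 0"
proof -
  have "(\<phi> (proj_eval u v a) = proj_eval Hp Hq a) \<and> (poly Hp a \<noteq> 0 \<or> poly Hq a \<noteq> 0)"
  proof (cases "poly v a = 0")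
    case False
    define b where "b = poly u a / poly v a"
    have "poly Hp a = poly v a ^ deg_\<phi> * poly (to_ac_poly p) b"
      "poly Hq a = poly v a ^ deg_\<phi> * poly (to_ac_poly q) b"
      using False by (simp_all add: Hp_def Hq_def b_def poly_homogenize_nonzero_denom)
    then show ?thesis
      using False no_common_root[of b] by (auto simp: \<phi>_Some proj_eval_def b_def)
  next
    case True
    then have "poly u a \<noteq> 0" using uv by simp
    have "poly Hp a = to_ac (coeff p deg_\<phi>) * poly u a ^ deg_\<phi>"
      "poly Hq a = to_ac (coeff q deg_\<phi>) * poly u a ^ deg_\<phi>"
      using True by (simp_all add: Hp_def Hq_def poly_homogenize_zero_denom)
    then show ?thesis
      using True \<open>poly u a \<noteq> 0\<close> coeff_deg_\<phi>_nonzero denom_nonzero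
      by (auto simp: phi_P1_def proj_eval_def max_def coeff_eq_0)
  qed
  then show "\<phi> (proj_eval u v a) = proj_eval Hp Hq a" and "poly Hp a \<noteq> 0 \<or> poly Hq a \<noteq> 0"
    by blast+
qed

lemma \<phi>_nonconstant:
  assumes "infinite B"
  shows "\<exists>b\<in>B. \<exists>b'\<in>B. \<phi> (Some b) \<noteq> \<phi> (Some b')"
proof (rule ccontr)
  assume "\<not> ?thesis"
  moreover obtain b0 where "b0 \<in> B" using assms by (metis ex_in_conv finite.emptyI)
  ultimately obtain c where c: "\<And>b. b \<in> B \<Longrightarrow> \<phi> (Some b) = c" by blast
  show False
  proof (cases c)
    case None
    have "poly (to_ac_poly q) b = 0" if "b \<in> B" for b
      using c[OF that] None by (auto simp: \<phi>_Some proj_eval_def split: if_splits)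
    then have "B \<subseteq> {b. poly (to_ac_poly q) b = 0}" by blast
    then show False using assms denom_nonzero poly_roots_finite[of "to_ac_poly q"]
      by (auto dest: finite_subset)
  next
    case (Some g)
    let ?F = "to_ac_poly p - smult g (to_ac_poly q)"
    have "poly ?F b = 0" if "b \<in> B" for b
      using c[OF that] Some by (auto simp: \<phi>_Some proj_eval_def field_simps split: if_splits)
    then have "B \<subseteq> {b. poly ?F b = 0}" by blast
    then have "infinite {b. poly ?F b = 0}" using assms finite_subset by blast
    then have "?F = 0" using poly_roots_finite by blast
    then have p: "to_ac_poly p = smult g (to_ac_poly q)" by simp
    show False
    proof (cases "degree q = 0")
      case True
      have "degree p = degree (smult g (to_ac_poly q))" using arg_cong[OF p, of degree] by simp
      then have "degree p \<le> degree q" using degree_smult_le[of g "to_ac_poly q"] by simp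
      then show False using True nonconstant by simp
    next
      case False
      then obtain x where "poly (to_ac_poly q) x = 0"
        using alg_closed_imp_poly_has_root[of "to_ac_poly q"] by auto
      then show False using p no_common_root[of x] by simp
    qed
  qed
qed

lemma homogenize_denom_nonzero:
  assumes "infinite {b. \<exists>a. proj_eval (to_ac_poly u) (to_ac_poly v) a = Some b}"
  shows "homogenize deg_\<phi> q u v \<noteq> 0"
proof
  assume "homogenize deg_\<phi> q u v = 0"
  then have Hq: "homogenize deg_\<phi> (to_ac_poly q) (to_ac_poly u) (to_ac_poly v) = 0"
    using to_ac_poly_homogenize[of deg_\<phi> q u v] by simp
  have "poly (to_ac_poly q) b = 0" if "proj_eval (to_ac_poly u) (to_ac_poly v) a = Some b" for a b
    using that arg_cong[OF Hq, of "\<lambda>f. poly f a"]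
    by (auto simp: proj_eval_def poly_homogenize_nonzero_denom split: if_splits)
  then have "{b. \<exists>a. proj_eval (to_ac_poly u) (to_ac_poly v) a = Some b} \<subseteq> {b. poly (to_ac_poly q) b = 0}"
    by blast
  then have "infinite {b. poly (to_ac_poly q) b = 0}" using assms by (rule infinite_super)
  then show False using poly_roots_finite denom_nonzero by auto
qed

lemma rat_subst_cross_eq:
  assumes "coprime u v" "v \<noteq> 0" "degree u \<noteq> 0 \<or> degree v \<noteq> 0"
    and "V \<noteq> 0" and UV: "to_fract U / to_fract V = rat_subst p q (to_fract u / to_fract v)"
  shows "U * homogenize deg_\<phi> q u v = homogenize deg_\<phi> p u v * V"
proof -
  have "infinite {b. \<exists>a. proj_eval (to_ac_poly u) (to_ac_poly v) a = Some b}"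
    using assms(3) coprime_imp_no_common_root_ac[OF \<open>coprime u v\<close>]
    by (intro infinite_proj_eval_values) simp_all
  then have "homogenize deg_\<phi> q u v \<noteq> 0" by (rule homogenize_denom_nonzero)
  moreover have "to_fract U / to_fract V =
      to_fract (homogenize deg_\<phi> p u v) / to_fract (homogenize deg_\<phi> q u v)"
    unfolding UV using \<open>v \<noteq> 0\<close> by (intro rat_subst_fraction) simp_all
  ultimately show ?thesis using \<open>V \<noteq> 0\<close> by (intro to_fract_cross_eq)
qed

lemma funpow_Suc_proj_eval:
  assumes "coprime u v" "v \<noteq> 0" "degree u \<noteq> 0 \<or> degree v \<noteq> 0"
    and iterate: "\<And>a. (\<phi> ^^ d) (Some a) = proj_eval (to_ac_poly u) (to_ac_poly v) a"
    and "coprime U V" "V \<noteq> 0" and "to_fract U / to_fract V = rat_subst p q (to_fract u / to_fract v)"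
  shows "(\<phi> ^^ Suc d) (Some a) = proj_eval (to_ac_poly U) (to_ac_poly V) a"
    and "degree U \<noteq> 0 \<or> degree V \<noteq> 0"
proof -
  define Hp where "Hp = homogenize deg_\<phi> p u v"
  define Hq where "Hq = homogenize deg_\<phi> q u v"
  have uv: "poly (to_ac_poly u) a \<noteq> 0 \<or> poly (to_ac_poly v) a \<noteq> 0" for a
    using coprime_imp_no_common_root_ac[OF \<open>coprime u v\<close>] .
  have cross: "to_ac_poly U * to_ac_poly Hq = to_ac_poly Hp * to_ac_poly V"
    using rat_subst_cross_eq[OF assms(1-3,6,7)] unfolding Hp_def Hq_def
    by (metis to_ac_poly_hom.hom_mult)
  have Suc_d: "(\<phi> ^^ Suc d) (Some a) = proj_eval (to_ac_poly U) (to_ac_poly V) a" for a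
  proof -
    note \<phi>_uv = \<phi>_proj_eval[OF uv[of a]]
    have "(\<phi> ^^ Suc d) (Some a) = proj_eval (to_ac_poly Hp) (to_ac_poly Hq) a"
      using \<phi>_uv(1) iterate[of a] by (simp add: Hp_def Hq_def to_ac_poly_homogenize)
    also have "\<dots> = proj_eval (to_ac_poly U) (to_ac_poly V) a"
      using \<phi>_uv(2) coprime_imp_no_common_root_ac[OF \<open>coprime U V\<close>]
      by (intro proj_eval_eq_if_cross_eq[symmetric] cross)
         (simp_all add: Hp_def Hq_def to_ac_poly_homogenize)
    finally show ?thesis .
  qed
  then show "(\<phi> ^^ Suc d) (Some a) = proj_eval (to_ac_poly U) (to_ac_poly V) a" .
  show "degree U \<noteq> 0 \<or> degree V \<noteq> 0"
  proof (rule ccontr)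
    let ?range = "{b. \<exists>a. proj_eval (to_ac_poly u) (to_ac_poly v) a = Some b}"
    assume "\<not> ?thesis"
    then have const: "(\<phi> ^^ Suc d) (Some a) = (\<phi> ^^ Suc d) (Some 0)" for a
      unfolding Suc_d by (intro proj_eval_const) simp_all
    have "\<phi> (Some b) = \<phi> (Some b')" if in_range: "b \<in> ?range" "b' \<in> ?range" for b b'
    proof -
      obtain a a' where "(\<phi> ^^ d) (Some a) = Some b" "(\<phi> ^^ d) (Some a') = Some b'"
        using in_range iterate by auto
      then show ?thesis using const[of a] const[of a'] by simp
    qed
    moreover have "infinite ?range" using assms(3) by (intro infinite_proj_eval_values uv) simp
    ultimately show False using \<phi>_nonconstant by blast
  qed
qed

end

locale iterate_representatives = nonconstant_rational_map p q for p q :: "'k::field_char_0 poly" +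
  fixes pd qd :: "nat \<Rightarrow> 'k poly"
  assumes iterate_reps: "iterate_reps p q pd qd"
begin

lemma qd_nonzero: "d \<ge> 1 \<Longrightarrow> qd d \<noteq> 0"
  and coprime_pd_qd: "d \<ge> 1 \<Longrightarrow> coprime (pd d) (qd d)"
  and fraction_pd_qd: "d \<ge> 1 \<Longrightarrow> to_fract (pd d) / to_fract (qd d) = rat_iter p q d"
  using iterate_reps by (auto simp: iterate_reps_def)

lemma no_common_root_pd_qd:
  "d \<ge> 1 \<Longrightarrow> poly (to_ac_poly (pd d)) a \<noteq> 0 \<or> poly (to_ac_poly (qd d)) a \<noteq> 0"
  using coprime_imp_no_common_root_ac coprime_pd_qd by blast

lemma funpow_\<phi>_Some_and_nonconstant:
  assumes "d \<ge> 1"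
  shows "(\<forall>a. (\<phi> ^^ d) (Some a) = proj_eval (to_ac_poly (pd d)) (to_ac_poly (qd d)) a) \<and>
         (degree (pd d) \<noteq> 0 \<or> degree (qd d) \<noteq> 0)"
  using assms
proof (induction d rule: dec_induct)
  case base
  have "to_fract (pd 1) / to_fract (qd 1) = rat_subst p q (to_fract [:0, 1:] / to_fract 1)"
    using fraction_pd_qd[of 1] by (simp add: rat_iter_def rat_X_def)
  then show ?case
    using funpow_Suc_proj_eval[of "[:0, 1:]" 1 0 "pd 1" "qd 1"] coprime_pd_qd qd_nonzero
    by (simp add: proj_eval_def)
next
  case (step d)
  have "to_fract (pd (Suc d)) / to_fract (qd (Suc d)) = rat_subst p q (to_fract (pd d) / to_fract (qd d))"
    using fraction_pd_qd[of "Suc d"] fraction_pd_qd[of d] step.hyps by (simp add: rat_iter_def)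
  then show ?case
    using funpow_Suc_proj_eval[of "pd d" "qd d" d "pd (Suc d)" "qd (Suc d)"] step coprime_pd_qd qd_nonzero
    by simp
qed

lemma funpow_\<phi>_Some:
  "d \<ge> 1 \<Longrightarrow> (\<phi> ^^ d) (Some a) = proj_eval (to_ac_poly (pd d)) (to_ac_poly (qd d)) a"
  using funpow_\<phi>_Some_and_nonconstant by blast

definition fixed_poly :: "nat \<Rightarrow> 'k poly" where
  "fixed_poly d = [:0, 1:] * qd d - pd d"

lemma poly_fixed_poly:
  "poly (to_ac_poly (fixed_poly d)) a = a * poly (to_ac_poly (qd d)) a - poly (to_ac_poly (pd d)) a"
  by (simp add: fixed_poly_def hom_distribs)

lemma funpow_\<phi>_fixed_iff:
  assumes "d \<ge> 1"
  shows "(\<phi> ^^ d) (Some a) = Some a \<longleftrightarrow> poly (to_ac_poly (fixed_poly d)) a = 0"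
  using no_common_root_pd_qd[OF assms, of a]
  by (auto simp: funpow_\<phi>_Some[OF assms] proj_eval_def poly_fixed_poly field_simps)

lemma fixed_point_denom_nonzero:
  assumes "d \<ge> 1" "(\<phi> ^^ d) (Some a) = Some a"
  shows "poly (to_ac_poly (qd d)) a \<noteq> 0"
  using assms by (auto simp: funpow_\<phi>_Some proj_eval_def split: if_splits)

section \<open>Local germs at fixed points\<close>

text \<open>Near a fixed point \<open>a\<close> of \<open>\<phi>\<^sup>d\<close>: \<open>\<phi>\<^sup>d(a + t) = a + iterate_germ a d t\<close>.\<close>
definition iterate_germ :: "'k alg_closure \<Rightarrow> nat \<Rightarrow> 'k alg_closure fps" where
  "iterate_germ a d =
     taylor_fps a (to_ac_poly (pd d)) * inverse (taylor_fps a (to_ac_poly (qd d))) - fps_const a"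

lemma taylor_pd_eq:
  assumes "poly (to_ac_poly (qd d)) a \<noteq> 0"
  shows "taylor_fps a (to_ac_poly (pd d)) = taylor_fps a (to_ac_poly (qd d)) * (fps_const a + iterate_germ a d)"
proof -
  have "taylor_fps a (to_ac_poly (qd d)) * inverse (taylor_fps a (to_ac_poly (qd d))) = 1"
    using assms by (intro inverse_mult_eq_1') simp
  then show ?thesis by (simp add: iterate_germ_def algebra_simps)
qed

lemma iterate_germ_nth_0:
  assumes "d \<ge> 1" "(\<phi> ^^ d) (Some a) = Some a"
  shows "iterate_germ a d $ 0 = 0"
  using assms fixed_point_denom_nonzero[OF assms]
  by (auto simp: iterate_germ_def funpow_\<phi>_Some proj_eval_def divide_inverse split: if_splits)

lemma taylor_fixed_poly:
  assumes "d \<ge> 1" "(\<phi> ^^ d) (Some a) = Some a"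
  shows "taylor_fps a (to_ac_poly (fixed_poly d)) =
         taylor_fps a (to_ac_poly (qd d)) * (fps_X - iterate_germ a d)"
proof -
  have "to_ac_poly (fixed_poly d) = [:0, 1:] * to_ac_poly (qd d) - to_ac_poly (pd d)"
    by (simp add: fixed_poly_def hom_distribs)
  then have "taylor_fps a (to_ac_poly (fixed_poly d)) =
        (fps_const a + fps_X) * taylor_fps a (to_ac_poly (qd d)) - taylor_fps a (to_ac_poly (pd d))"
    by (simp only: taylor_fps_hom.hom_minus taylor_fps_hom.hom_mult taylor_fps_X)
  then show ?thesis
    using taylor_pd_eq[OF fixed_point_denom_nonzero[OF assms]] by (simp add: algebra_simps)
qed

lemma order_fixed_poly:
  assumes "d \<ge> 1" "(\<phi> ^^ d) (Some a) = Some a" "fixed_poly d \<noteq> 0"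
  shows "order a (to_ac_poly (fixed_poly d)) = subdegree (fps_X - iterate_germ a d)"
    and "iterate_germ a d \<noteq> fps_X"
proof -
  have "taylor_fps a (to_ac_poly (qd d)) $ 0 \<noteq> 0"
    using fixed_point_denom_nonzero[OF assms(1,2)] by simp
  then have "taylor_fps a (to_ac_poly (qd d)) \<noteq> 0" "subdegree (taylor_fps a (to_ac_poly (qd d))) = 0"
    by (auto simp: subdegree_eq_0_iff)
  moreover have "taylor_fps a (to_ac_poly (fixed_poly d)) \<noteq> 0" using assms(3) by simp
  ultimately show "iterate_germ a d \<noteq> fps_X"
    and "order a (to_ac_poly (fixed_poly d)) = subdegree (fps_X - iterate_germ a d)"
    using taylor_fixed_poly[OF assms(1,2)] subdegree_taylor_fps[of "to_ac_poly (fixed_poly d)" a] assms(3)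
    by auto
qed

text \<open>\<open>\<phi>\<^sup>d\<^sup>+\<^sup>e = \<phi>\<^sup>d \<circ> \<phi>\<^sup>e\<close> as a polynomial identity, checked pointwise off a finite set.\<close>
lemma iterate_add_cross_eq:
  assumes d: "d \<ge> 1" and e: "e \<ge> 1" and "poly (to_ac_poly (qd e)) a0 \<noteq> 0"
    and "poly (to_ac_poly (qd d)) (poly (to_ac_poly (pd e)) a0 / poly (to_ac_poly (qd e)) a0) \<noteq> 0"
  defines "D \<equiv> max (degree (pd d)) (degree (qd d))"
  shows "to_ac_poly (pd (d + e)) * homogenize D (to_ac_poly (qd d)) (to_ac_poly (pd e)) (to_ac_poly (qd e)) =
         to_ac_poly (qd (d + e)) * homogenize D (to_ac_poly (pd d)) (to_ac_poly (pd e)) (to_ac_poly (qd e))"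
    (is "?P * ?Hq = ?Q * ?Hp")
proof -
  let ?G = "to_ac_poly (qd e) * ?Hq"
  have dq: "degree (to_ac_poly (qd d)) \<le> D" and dp: "degree (to_ac_poly (pd d)) \<le> D"
    by (auto simp: D_def)
  have "poly ?G a0 \<noteq> 0" using assms(3,4) by (simp add: poly_homogenize_nonzero_denom[OF dq])
  then have "?G \<noteq> 0" by auto
  have "?P * ?Hq - ?Q * ?Hp = 0"
  proof (rule poly_eq_0_if_cofinite_roots)
    show "finite {x. poly ?G x = 0}" using \<open>?G \<noteq> 0\<close> by (rule poly_roots_finite)
  next
    fix x assume "x \<notin> {x. poly ?G x = 0}"
    then have qx: "poly (to_ac_poly (qd e)) x \<noteq> 0" and "poly ?Hq x \<noteq> 0" by auto
    define y where "y = poly (to_ac_poly (pd e)) x / poly (to_ac_poly (qd e)) x"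
    have Hq: "poly ?Hq x = poly (to_ac_poly (qd e)) x ^ D * poly (to_ac_poly (qd d)) y"
      and Hp: "poly ?Hp x = poly (to_ac_poly (qd e)) x ^ D * poly (to_ac_poly (pd d)) y"
      unfolding y_def by (simp_all add: poly_homogenize_nonzero_denom[OF dq qx]
                                      poly_homogenize_nonzero_denom[OF dp qx])
    then have qy: "poly (to_ac_poly (qd d)) y \<noteq> 0" using \<open>poly ?Hq x \<noteq> 0\<close> by auto
    have "proj_eval ?P ?Q x = (\<phi> ^^ d) ((\<phi> ^^ e) (Some x))"
      using funpow_\<phi>_Some[of "d + e" x] d by (simp add: funpow_add)
    also have "\<dots> = Some (poly (to_ac_poly (pd d)) y / poly (to_ac_poly (qd d)) y)"
      using qx qy d e by (simp add: funpow_\<phi>_Some proj_eval_def y_def)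
    finally have "poly ?Q x \<noteq> 0"
      "poly ?P x / poly ?Q x = poly (to_ac_poly (pd d)) y / poly (to_ac_poly (qd d)) y"
      by (auto simp: proj_eval_def split: if_splits)
    then show "poly (?P * ?Hq - ?Q * ?Hp) x = 0"
      using qy by (simp add: Hq Hp frac_eq_eq algebra_simps)
  qed
  then show ?thesis by simp
qed

lemma iterate_germ_add:
  assumes d: "d \<ge> 1" and e: "e \<ge> 1"
    and fd: "(\<phi> ^^ d) (Some a) = Some a" and fe: "(\<phi> ^^ e) (Some a) = Some a"
  shows "iterate_germ a (d + e) = iterate_germ a d oo iterate_germ a e"
proof -
  define D where "D = max (degree (pd d)) (degree (qd d))"
  let ?T = "\<lambda>f. taylor_fps a (to_ac_poly f)"
  let ?Te = "iterate_germ a e" and ?W = "?T (qd d) oo iterate_germ a e"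
  have de: "d + e \<ge> 1" and fde: "(\<phi> ^^ (d + e)) (Some a) = Some a"
    using d fd fe by (simp_all add: funpow_add)
  note qd = fixed_point_denom_nonzero[OF d fd] and qe = fixed_point_denom_nonzero[OF e fe]
    and qde = fixed_point_denom_nonzero[OF de fde]
  have Te0: "?Te $ 0 = 0" by (rule iterate_germ_nth_0[OF e fe])
  have "poly (to_ac_poly (pd e)) a / poly (to_ac_poly (qd e)) a = a"
    using fe e qe by (simp add: funpow_\<phi>_Some proj_eval_def)
  then have cross: "?T (pd (d + e)) * ?T (qd e) ^ D * ?W = ?T (qd (d + e)) * ?T (qd e) ^ D * (?T (pd d) oo ?Te)"
    using arg_cong[OF iterate_add_cross_eq[OF d e qe], of "taylor_fps a"] qd
    by (simp add: D_def taylor_fps_homogenize[OF _ taylor_pd_eq[OF qe]] taylor_fps_compose[OF Te0]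
                  hom_distribs mult_ac)
  have "?T (qd e) ^ D \<noteq> 0" "?W \<noteq> 0" "?T (qd (d + e)) \<noteq> 0"
    using qe qd qde d by (auto dest: arg_cong[where f = "\<lambda>f. f $ 0"])
  moreover have "?T (pd d) oo ?Te = ?W * (fps_const a + (iterate_germ a d oo ?Te))"
    using taylor_pd_eq[OF qd] Te0 by (simp add: fps_compose_mult_distrib fps_compose_add_distrib)
  ultimately have "?T (pd (d + e)) = ?T (qd (d + e)) * (fps_const a + (iterate_germ a d oo ?Te))"
    using cross qd_nonzero[OF e] by (simp add: mult_ac)
  then have "?T (qd (d + e)) * (fps_const a + iterate_germ a (d + e)) =
             ?T (qd (d + e)) * (fps_const a + (iterate_germ a d oo ?Te))"
    by (simp only: taylor_pd_eq[OF qde, symmetric])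
  then show ?thesis using \<open>?T (qd (d + e)) \<noteq> 0\<close> by simp
qed

lemma iterate_germ_mult:
  assumes m: "m \<ge> 1" and fm: "(\<phi> ^^ m) (Some a) = Some a" and "j \<ge> 1"
  shows "iterate_germ a (m * j) = fps_iterate (iterate_germ a m) j"
  using \<open>j \<ge> 1\<close>
proof (induction j rule: dec_induct)
  case base
  show ?case using iterate_germ_nth_0[OF m fm] by simp
next
  case (step j)
  have "(\<phi> ^^ (m * j)) (Some a) = Some a" using fm by (rule funpow_mult_fixed)
  then have "iterate_germ a (m * j + m) = iterate_germ a (m * j) oo iterate_germ a m"
    using m step.hyps by (intro iterate_germ_add fm) simp_all
  then show ?case using step.IH by (simp add: add.commute)
qed

section \<open>The dynatomic polynomial\<close>

text \<open>The multiplicity of \<open>a\<close> as a root of \<open>\<Phi>\<^sub>n\<close>, read off the defining product.\<close>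
definition dynatomic_order :: "nat \<Rightarrow> 'k alg_closure \<Rightarrow> int" where
  "dynatomic_order n a = (\<Sum>d | d dvd n. moebius_mu (n div d) * int (order a (to_ac_poly (fixed_poly d))))"

lemma dynatomic_order_eq_moebius_sum_germ:
  assumes "n \<ge> 1" and nonzero: "\<And>d. d dvd n \<Longrightarrow> fixed_poly d \<noteq> 0"
    and "m \<ge> 1" and period: "\<And>j. (\<phi> ^^ j) (Some a) = Some a \<longleftrightarrow> m dvd j" and "m dvd n"
  shows "dynatomic_order n a = (\<Sum>j | j dvd n div m.
           moebius_mu (n div m div j) * int (subdegree (fps_X - fps_iterate (iterate_germ a m) j)))"
proof -
  let ?e = "\<lambda>d. moebius_mu (n div d) * int (order a (to_ac_poly (fixed_poly d)))"
  have "?e d = 0" if "d dvd n" "\<not> m dvd d" for d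
  proof -
    have "d \<ge> 1" using that \<open>n \<ge> 1\<close> by (cases d) auto
    then show ?thesis using that period[of d] by (simp add: order_0I funpow_\<phi>_fixed_iff)
  qed
  then have "dynatomic_order n a = (\<Sum>d | d dvd n \<and> m dvd d. ?e d)"
    unfolding dynatomic_order_def using \<open>n \<ge> 1\<close>
    by (intro sum.mono_neutral_right) auto
  also have "\<dots> = (\<Sum>j | j dvd n div m. ?e (m * j))"
    using assms by (intro sum_divisors_multiples) auto
  also have "\<dots> = (\<Sum>j | j dvd n div m.
      moebius_mu (n div m div j) * int (subdegree (fps_X - fps_iterate (iterate_germ a m) j)))"
  proof (intro sum.cong refl)
    fix j assume "j \<in> {j. j dvd n div m}"
    then have "j dvd n div m" by simp
    then have "j \<ge> 1" "m * j dvd n" using dvd_cofactor[OF \<open>m dvd n\<close>] \<open>n \<ge> 1\<close> by (simp_all add: Suc_le_eq)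
    have fm: "(\<phi> ^^ m) (Some a) = Some a" and fmj: "(\<phi> ^^ (m * j)) (Some a) = Some a"
      using period by simp_all
    have "order a (to_ac_poly (fixed_poly (m * j))) = subdegree (fps_X - iterate_germ a (m * j))"
      using \<open>m \<ge> 1\<close> \<open>j \<ge> 1\<close> fmj nonzero[OF \<open>m * j dvd n\<close>] by (intro order_fixed_poly) simp_all
    also have "iterate_germ a (m * j) = fps_iterate (iterate_germ a m) j"
      by (rule iterate_germ_mult[OF \<open>m \<ge> 1\<close> fm \<open>j \<ge> 1\<close>])
    finally show "?e (m * j) =
        moebius_mu (n div m div j) * int (subdegree (fps_X - fps_iterate (iterate_germ a m) j))"
      by (simp add: div_mult2_eq)
  qed
  finally show ?thesis .
qed

lemma dynatomic_order_eq_0_if_not_fixed: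
  assumes "n \<ge> 1" and "\<And>d. d dvd n \<Longrightarrow> (\<phi> ^^ d) (Some a) \<noteq> Some a"
  shows "dynatomic_order n a = 0"
proof -
  have "order a (to_ac_poly (fixed_poly d)) = 0" if "d dvd n" for d
  proof -
    have "d \<ge> 1" using that \<open>n \<ge> 1\<close> by (cases d) auto
    then show ?thesis using assms(2)[OF that] by (intro order_0I) (simp add: funpow_\<phi>_fixed_iff)
  qed
  then show ?thesis by (simp add: dynatomic_order_def)
qed

lemma dynatomic_order_cases:
  assumes "n \<ge> 1" and nonzero: "\<And>d. d dvd n \<Longrightarrow> fixed_poly d \<noteq> 0"
  shows "(periodic_point p q n (Some a) \<longrightarrow> dynatomic_order n a \<ge> 1) \<and>
         (\<not> periodic_point p q n (Some a) \<longrightarrow> dynatomic_order n a = 0 \<or> dynatomic_order n a \<ge> 2)"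
proof (cases "\<exists>d. d dvd n \<and> (\<phi> ^^ d) (Some a) = Some a")
  case False
  then show ?thesis
    using dynatomic_order_eq_0_if_not_fixed[OF \<open>n \<ge> 1\<close>] by (auto simp: periodic_point_def)
next
  case True
  then obtain d0 where d0: "d0 dvd n" "(\<phi> ^^ d0) (Some a) = Some a" by blast
  have "d0 > 0" using d0 \<open>n \<ge> 1\<close> by (cases d0) auto
  define m where "m = least_power \<phi> (Some a)"
  have period: "(\<phi> ^^ j) (Some a) = Some a \<longleftrightarrow> m dvd j" for j
    unfolding m_def using d0 \<open>d0 > 0\<close> by (intro funpow_eq_self_iff_least_power_dvd)
  have "m \<ge> 1" using least_powerI(2)[OF d0(2) \<open>d0 > 0\<close>] by (simp add: m_def)
  have "m dvd n" using period d0 dvd_trans by blast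
  then have "n div m > 0" using \<open>n \<ge> 1\<close> by (auto elim!: dvdE)
  have periodic: "periodic_point p q n (Some a) \<longleftrightarrow> n div m = 1"
    using least_power_eq_iff[where f = \<phi> and n = n and x = "Some a"] period[of n] \<open>m dvd n\<close> \<open>m \<ge> 1\<close> \<open>n \<ge> 1\<close>
    by (auto simp: periodic_point_def m_def elim!: dvdE)
  have G0: "iterate_germ a m $ 0 = 0" using \<open>m \<ge> 1\<close> period by (intro iterate_germ_nth_0) simp_all
  have not_id: "fps_iterate (iterate_germ a m) j \<noteq> fps_X" if "j dvd n div m" for j
  proof -
    have "j \<ge> 1" "m * j dvd n" using dvd_cofactor[OF \<open>m dvd n\<close> _ that] \<open>n \<ge> 1\<close> by (simp_all add: Suc_le_eq)
    then show ?thesis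
      using iterate_germ_mult[OF \<open>m \<ge> 1\<close> _ \<open>j \<ge> 1\<close>] order_fixed_poly(2)[of "m * j" a]
            \<open>m \<ge> 1\<close> period nonzero by simp
  qed
  have "dynatomic_order n a = (\<Sum>j | j dvd n div m.
      moebius_mu (n div m div j) * int (subdegree (fps_X - fps_iterate (iterate_germ a m) j)))"
    by (rule dynatomic_order_eq_moebius_sum_germ[OF assms \<open>m \<ge> 1\<close> period \<open>m dvd n\<close>])
  with moebius_sum_subdegree_iterates[OF G0 \<open>n div m > 0\<close> not_id] show ?thesis
    unfolding periodic by (intro conjI impI) (simp_all add: Suc_le_eq)
qed

context
  fixes n :: nat
  assumes n: "n \<ge> 1" and discriminant: "poly_discriminant (dynatomic_poly pd qd n) \<noteq> 0"
begin

text \<open>If some \<open>x q\<^sub>d - p\<^sub>d\<close> vanished, every point would be fixed by \<open>\<phi>\<^sup>n\<close> and the factor for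
  \<open>d = n\<close> would make \<open>\<Phi>\<^sub>n = 0\<close>, whose discriminant is \<open>0\<close>.\<close>
lemma fixed_poly_nonzero:
  assumes "d dvd n"
  shows "fixed_poly d \<noteq> 0"
proof
  assume "fixed_poly d = 0"
  have "d \<ge> 1" using assms n by (cases d) auto
  then have "(\<phi> ^^ d) (Some a) = Some a" for a using \<open>fixed_poly d = 0\<close> by (simp add: funpow_\<phi>_fixed_iff)
  moreover obtain k where "n = d * k" using assms by (rule dvdE)
  ultimately have "(\<phi> ^^ n) (Some a) = Some a" for a by (simp add: funpow_mult_fixed)
  then have "to_ac_poly (fixed_poly n) = 0"
    using n by (simp add: funpow_\<phi>_fixed_iff poly_all_0_iff_0[symmetric])
  then have "fixed_poly n = 0" by simp
  then have "dynatomic_fract pd qd n = 0"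
    unfolding dynatomic_fract_def fixed_poly_def[symmetric] using n
    by (intro prod_zero bexI[of _ n]) simp_all
  then have "dynatomic_poly pd qd n = 0"
    unfolding dynatomic_poly_def by (intro the_equality) auto
  then show False using discriminant by (simp add: poly_discriminant_def)
qed

definition dynatomic_num :: "'k poly" where
  "dynatomic_num = (\<Prod>d | d \<in> {d. d dvd n} \<and> moebius_mu (n div d) = 1. fixed_poly d)"

definition dynatomic_den :: "'k poly" where
  "dynatomic_den = (\<Prod>d | d \<in> {d. d dvd n} \<and> moebius_mu (n div d) = -1. fixed_poly d)"

lemma dynatomic_num_nonzero: "dynatomic_num \<noteq> 0"
  and dynatomic_den_nonzero: "dynatomic_den \<noteq> 0"
  using fixed_poly_nonzero n by (auto simp: dynatomic_num_def dynatomic_den_def)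

lemma dynatomic_fract_eq: "dynatomic_fract pd qd n = to_fract dynatomic_num / to_fract dynatomic_den"
  unfolding dynatomic_fract_def fixed_poly_def[symmetric] dynatomic_num_def dynatomic_den_def
  using n by (simp add: prod_powi_moebius_mu to_fract_hom.hom_prod)

lemma order_num_minus_order_den:
  "int (order a (to_ac_poly dynatomic_num)) - int (order a (to_ac_poly dynatomic_den)) = dynatomic_order n a"
proof -
  have "order a (\<Prod>d | d \<in> {d. d dvd n} \<and> P d. to_ac_poly (fixed_poly d)) =
        (\<Sum>d | d \<in> {d. d dvd n} \<and> P d. order a (to_ac_poly (fixed_poly d)))" for P
    using n fixed_poly_nonzero by (intro order_prod) auto
  then show ?thesis
    unfolding dynatomic_order_def dynatomic_num_def dynatomic_den_def
    using n by (simp add: sum_moebius_mu_mult hom_distribs)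
qed

lemma dynatomic_den_dvd_num: "dynatomic_den dvd dynatomic_num"
proof -
  have "to_ac_poly dynatomic_den dvd to_ac_poly dynatomic_num"
  proof (rule dvd_if_order_le)
    fix a
    have "dynatomic_order n a \<ge> 0"
      using dynatomic_order_cases[OF n fixed_poly_nonzero, of a] by linarith
    then show "order a (to_ac_poly dynatomic_den) \<le> order a (to_ac_poly dynatomic_num)"
      using order_num_minus_order_den[of a] by linarith
  qed (use dynatomic_num_nonzero dynatomic_den_nonzero in simp_all)
  then show ?thesis by (rule to_ac_hom.dvd_map_poly_hom_imp_dvd)
qed

lemma dynatomic_num_eq: "dynatomic_num = dynatomic_den * dynatomic_poly pd qd n"
proof -
  define \<Phi> where "\<Phi> = dynatomic_num div dynatomic_den"
  have num: "dynatomic_num = dynatomic_den * \<Phi>"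
    unfolding \<Phi>_def using dynatomic_den_dvd_num by simp
  then have "to_fract \<Phi> = dynatomic_fract pd qd n"
    using dynatomic_den_nonzero by (simp add: dynatomic_fract_eq)
  then have "dynatomic_poly pd qd n = \<Phi>"
    unfolding dynatomic_poly_def by (rule the_equality) (simp add: \<open>to_fract \<Phi> = _\<close>[symmetric])
  then show ?thesis using num by simp
qed

lemma order_dynatomic_poly: "int (order a (to_ac_poly (dynatomic_poly pd qd n))) = dynatomic_order n a"
proof -
  have "to_ac_poly dynatomic_num = to_ac_poly dynatomic_den * to_ac_poly (dynatomic_poly pd qd n)"
    using dynatomic_num_eq by (simp add: hom_distribs)
  moreover have "to_ac_poly dynatomic_num \<noteq> 0" using dynatomic_num_nonzero by simp
  ultimately have "order a (to_ac_poly dynatomic_num) =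
             order a (to_ac_poly dynatomic_den) + order a (to_ac_poly (dynatomic_poly pd qd n))"
    by (simp add: order_mult)
  then show ?thesis using order_num_minus_order_den[of a] by simp
qed

lemma roots_dynatomic_poly:
  "poly (to_ac_poly (dynatomic_poly pd qd n)) a = 0 \<longleftrightarrow> periodic_point p q n (Some a)"
proof -
  let ?\<Phi> = "to_ac_poly (dynatomic_poly pd qd n)"
  have "rsquarefree ?\<Phi>" by (rule rsquarefree_to_ac_poly_if_discriminant_nonzero[OF discriminant])
  then have "?\<Phi> \<noteq> 0" "order a ?\<Phi> = 0 \<or> order a ?\<Phi> = 1" by (auto simp: rsquarefree_def)
  then have "poly ?\<Phi> a = 0 \<longleftrightarrow> dynatomic_order n a = 1"
    using order_dynatomic_poly[of a] order_root[of ?\<Phi> a] by auto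
  also have "\<dots> \<longleftrightarrow> periodic_point p q n (Some a)"
  proof
    assume "dynatomic_order n a = 1"
    then show "periodic_point p q n (Some a)"
      using dynatomic_order_cases[OF n fixed_poly_nonzero, of a] by fastforce
  next
    assume "periodic_point p q n (Some a)"
    then show "dynatomic_order n a = 1"
      using dynatomic_order_cases[OF n fixed_poly_nonzero, of a] order_dynatomic_poly[of a]
        \<open>order a ?\<Phi> = 0 \<or> order a ?\<Phi> = 1\<close> by auto
  qed
  finally show ?thesis .
qed

end

end

lemma gen_field_subfield: "is_subfield (gen_field S)"
  unfolding gen_field_def is_subfield_def by auto

lemma gen_field_incl: "S \<subseteq> gen_field S"
  unfolding gen_field_def by auto

lemma gen_field_least: "is_subfield F \<Longrightarrow> S \<subseteq> F \<Longrightarrow> gen_field S \<subseteq> F"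
  unfolding gen_field_def by auto

lemma gen_field_mono: "S \<subseteq> T \<Longrightarrow> gen_field S \<subseteq> gen_field T"
  by (meson gen_field_incl gen_field_least gen_field_subfield order_trans)

lemma dynatomic_field_eq:
  "dynatomic_field p q n = gen_field (base_field \<union> {a. periodic_point p q n (Some a)})"
    (is "_ = gen_field (base_field \<union> ?A)")
proof (rule antisym)
  have "field_of_def P \<subseteq> gen_field (base_field \<union> ?A)" if "periodic_point p q n P" for P
    using that by (cases P) (auto simp: field_of_def_def intro!: gen_field_mono)
  then show "dynatomic_field p q n \<subseteq> gen_field (base_field \<union> ?A)"
    unfolding dynatomic_field_def using gen_field_incl
    by (intro gen_field_least[OF gen_field_subfield]) blast
next
  have "a \<in> field_of_def (Some a)" for a
    using gen_field_incl[of "insert a base_field"] by (simp add: field_of_def_def)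
  then show "gen_field (base_field \<union> ?A) \<subseteq> dynatomic_field p q n"
    unfolding dynatomic_field_def by (intro gen_field_mono) blast
qed

theorem lemma2p7:
  fixes p q :: "'k :: field_char_0 poly"
    and pd qd :: "nat \<Rightarrow> 'k poly"
    and n :: nat
  assumes "nonconst_ratfun p q"
    and "iterate_reps p q pd qd"
    and "n \<ge> 1"
    and "poly_discriminant (dynatomic_poly pd qd n) \<noteq> 0"
  shows "galois_group (dynatomic_field p q n) = poly_galois_group (dynatomic_poly pd qd n)"
proof -
  interpret iterate_representatives p q pd qd
    by unfold_locales (fact assms)+
  have "{x. poly (to_ac_poly (dynatomic_poly pd qd n)) x = 0} = {a. periodic_point p q n (Some a)}"
    using roots_dynatomic_poly[OF assms(3,4)] by blast
  then have "dynatomic_field p q n = splitting_field (dynatomic_poly pd qd n)"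
    by (simp add: dynatomic_field_eq splitting_field_def)
  then show ?thesis by (simp add: poly_galois_group_def)
qed

end
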